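(* Consider the two-species chemostat $$\dot s=-\mu_1(s)b_1-\mu_2(s)b_2+D(s_\mathrm{in}-s),\qquad \dot b_i=\mu_i(s)b_i-Db_i\quad(i=1,2),$$ with $s_\mathrm{in}>0$ and continuously differentiable growth functions $\mu_1,\mu_2:[0,s_\mathrm{in}]\to[0,\infty)$. Fix $\bar s\in(0,s_\mathrm{in})$ with $\mu_1(\bar s)<\mu_2(\bar s)$, and constants $0<D_{\min}<\mu_2(\bar s)<D_{\max}$. Use the dynamic feedback $$D=\operatorname{sat}_{[D_{\min},D_{\max}]}\big(\bar D-G_1(s-\bar s)\big),\qquad \frac{d}{dt}\bar D=-G_2(s-\bar s)(\bar D-D_{\min})(D_{\max}-\bar D).$$ Then for any constants $G_1>0$, $G_2>0$ with $G_1>-\mu_2'(\bar s)$, the equilibrium $(s,b_1,b_2,\bar D)=(\bar s,0,s_\mathrm{in}-\bar s,\mu_2(\bar s))$ of the closed-loop system is locally exponentially stable, and for solutions starting sufficiently close to it, $\lim_{t\to\infty}\bar D(t)=\mu_2(\bar s)$.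
   Context: The saturation function is $\operatorname{sat}_{[D_{\min},D_{\max}]}(x)=D_{\max}$ if $x>D_{\max}$, $=x$ if $x\in[D_{\min},D_{\max}]$, $=D_{\min}$ if $x<D_{\min}$. *)

theory Defs
  imports "HOL-Analysis.Analysis"
begin

type_synonym state = "real \<times> real \<times> real \<times> real"  (* (s, b1, b2, Dbar) *)

definition sat :: "real \<Rightarrow> real \<Rightarrow> real \<Rightarrow> real" where
  "sat a b x = (if x > b then b else if x < a then a else x)"

definition chemostat_cl ::
  "(real \<Rightarrow> real) \<Rightarrow> (real \<Rightarrow> real) \<Rightarrow> real \<Rightarrow> real \<Rightarrow> real \<Rightarrow> real \<Rightarrow> real \<Rightarrow> real
   \<Rightarrow> state \<Rightarrow> state" where
  "chemostat_cl mu1 mu2 s_in sbar Dmin Dmax G1 G2 x =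
     (case x of (s, b1, b2, Dh) \<Rightarrow>
       let D = sat Dmin Dmax (Dh - G1 * (s - sbar)) in
       (- mu1 s * b1 - mu2 s * b2 + D * (s_in - s),
        mu1 s * b1 - D * b1,
        mu2 s * b2 - D * b2,
        - G2 * (s - sbar) * (Dh - Dmin) * (Dmax - Dh)))"

definition ode_solution :: "(state \<Rightarrow> state) \<Rightarrow> (real \<Rightarrow> state) \<Rightarrow> bool" where
  "ode_solution f x \<longleftrightarrow> (\<forall>t\<ge>0. (x has_vector_derivative f (x t)) (at t within {0..}))"

definition locally_exp_stable :: "(state \<Rightarrow> state) \<Rightarrow> state \<Rightarrow> bool" where
  "locally_exp_stable f xe \<longleftrightarrow>
     (\<exists>\<delta>>0. \<exists>K>0. \<exists>r>0. \<forall>x. ode_solution f x \<and> norm (x 0 - xe) < \<delta> \<longrightarrow>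
        (\<forall>t\<ge>0. norm (x t - xe) \<le> K * exp (- r * t) * norm (x 0 - xe)))"

end

theory Submission
  imports Defs
begin

(* Near the equilibrium the saturation is inactive, so D = Dbar - G1 (s - sbar).
   In the deviation coordinates
     ds = s - sbar,  u = b2 - (s_in - sbar),  w = Dbar - mu2(sbar),  z = s + b1 + b2 - s_in
   the closed loop reads z' = -D z, b1' = (mu1 s - D) b1, u' = (mu2 s - D)(B0 + u) and
   w' = -G2 ds (Dbar - Dmin)(Dmax - Dbar).  The total mass deviation z and the losing species b1
   decay at a uniform rate, while (u, w) is, to first order, a damped linear oscillator driven by
   z - b1.  A quadratic Lyapunov function
     W = C0 u^2 + B0 w^2 + eps u w + L (z^2 + b1^2)
   with a small cross term eps and a large weight L therefore satisfies W' <= -r W near the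
   equilibrium, the nonlinear remainders being absorbed because they are small there. *)

section \<open>Lyapunov's method for local exponential stability\<close>

lemma continuous_induction_below:
  fixes g :: "real \<Rightarrow> real"
  assumes cont: "continuous_on {0..} g"
    and step: "\<And>t. t \<ge> 0 \<Longrightarrow> (\<And>\<tau>. 0 < \<tau> \<Longrightarrow> \<tau> < t \<Longrightarrow> g \<tau> < \<rho>) \<Longrightarrow> g t < \<rho>"
    and t: "t \<ge> 0"
  shows "g t < \<rho>"
proof (rule ccontr)
  assume "\<not> g t < \<rho>"
  define S where "S = {0..} \<inter> g -` {\<rho>..}"
  have S_ne: "S \<noteq> {}" and S_bdd: "bdd_below S"
    using \<open>\<not> g t < \<rho>\<close> t unfolding S_def by (auto intro: bdd_belowI[of _ 0])
  have "closed S"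
    unfolding S_def by (intro continuous_closed_preimage cont) auto
  then have T: "Inf S \<in> S" by (rule closed_contains_Inf[OF S_ne S_bdd])
  have "g (Inf S) < \<rho>"
  proof (rule step)
    show "Inf S \<ge> 0" using T unfolding S_def by auto
    fix \<tau> assume "0 < \<tau>" "\<tau> < Inf S"
    then show "g \<tau> < \<rho>"
      using cInf_lower[OF _ S_bdd, of \<tau>] unfolding S_def by force
  qed
  with T show False unfolding S_def by auto
qed

lemma ode_solution_continuous:
  assumes "ode_solution f x"
  shows "continuous_on {0..} x"
  unfolding continuous_on_eq_continuous_within
  using assms has_vector_derivative_continuous unfolding ode_solution_def by blast

lemma lyapunov_decay:
  fixes f :: "state \<Rightarrow> state" and W :: "state \<Rightarrow> real"
  assumes W_deriv: "\<And>y. (W has_derivative DW y) (at y)"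
    and sol: "ode_solution f x" and t: "t \<ge> 0"
    and decay: "\<And>\<tau>. 0 < \<tau> \<Longrightarrow> \<tau> < t \<Longrightarrow> DW (x \<tau>) (f (x \<tau>)) \<le> - r * W (x \<tau>)"
  shows "W (x t) \<le> W (x 0) * exp (- r * t)"
proof -
  define h where "h \<tau> = W (x \<tau>) * exp (r * \<tau>)" for \<tau>
  have h_deriv: "(h has_real_derivative (DW (x \<tau>) (f (x \<tau>)) + r * W (x \<tau>)) * exp (r * \<tau>))
      (at \<tau> within {0..})" if "\<tau> \<ge> 0" for \<tau>
  proof -
    have "((W \<circ> x) has_vector_derivative DW (x \<tau>) (f (x \<tau>))) (at \<tau> within {0..})"
      using sol that unfolding ode_solution_def
      by (intro vector_derivative_diff_chain_within has_derivative_at_withinI[OF W_deriv]) auto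
    then show ?thesis
      unfolding h_def has_real_derivative_iff_has_vector_derivative[symmetric] o_def
      by (auto intro!: derivative_eq_intros simp: algebra_simps)
  qed
  have "h t \<le> h 0"
  proof (rule DERIV_nonpos_imp_decreasing_open[OF t])
    fix \<tau> assume \<tau>: "0 < \<tau>" "\<tau> < t"
    have "at \<tau> within {0..} = at \<tau>" by (rule at_within_interior) (use \<tau> in simp)
    moreover have "(DW (x \<tau>) (f (x \<tau>)) + r * W (x \<tau>)) * exp (r * \<tau>) \<le> 0"
      using decay[OF \<tau>] by (intro mult_nonpos_nonneg) auto
    ultimately show "\<exists>y. (h has_real_derivative y) (at \<tau>) \<and> y \<le> 0"
      using h_deriv[of \<tau>] \<tau> by auto
  next
    have "continuous_on {0..} h"
      unfolding continuous_on_eq_continuous_within using DERIV_continuous[OF h_deriv] by auto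
    then show "continuous_on {0..t} h" by (rule continuous_on_subset) auto
  qed
  then show ?thesis unfolding h_def by (simp add: exp_minus field_simps)
qed

lemma lyapunov_exp_stable:
  fixes f :: "state \<Rightarrow> state" and W :: "state \<Rightarrow> real"
  assumes W_deriv: "\<And>y. (W has_derivative DW y) (at y)"
    and W_lower: "\<And>y. m * (norm (y - xe))\<^sup>2 \<le> W y" and m: "m > 0"
    and W_upper: "\<And>y. W y \<le> M * (norm (y - xe))\<^sup>2" and M: "M > 0"
    and decay: "\<And>y. norm (y - xe) < \<rho> \<Longrightarrow> DW y (f y) \<le> - r * W y"
    and r: "r > 0" and \<rho>: "\<rho> > 0"
  shows "locally_exp_stable f xe"
proof -
  define K where "K = sqrt (M / m)"
  have K: "K > 0" and K2: "K\<^sup>2 = M / m" unfolding K_def using m M by simp_all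
  have "\<forall>x. ode_solution f x \<and> norm (x 0 - xe) < \<rho> / K \<longrightarrow>
      (\<forall>t\<ge>0. norm (x t - xe) \<le> K * exp (- (r / 2) * t) * norm (x 0 - xe))"
  proof (rule allI, rule impI)
    fix x assume "ode_solution f x \<and> norm (x 0 - xe) < \<rho> / K"
    then have sol: "ode_solution f x" and e0: "K * norm (x 0 - xe) < \<rho>"
      using K by (auto simp: field_simps)
    have bound: "norm (x t - xe) \<le> K * exp (- (r / 2) * t) * norm (x 0 - xe)"
      if t: "t \<ge> 0" and inside: "\<And>\<tau>. 0 < \<tau> \<Longrightarrow> \<tau> < t \<Longrightarrow> norm (x \<tau> - xe) < \<rho>" for t
    proof -
      have "m * (norm (x t - xe))\<^sup>2 \<le> W (x 0) * exp (- r * t)"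
        using W_lower[of "x t"] lyapunov_decay[OF W_deriv sol t decay[OF inside]] by linarith
      also have "\<dots> \<le> M * (norm (x 0 - xe))\<^sup>2 * exp (- r * t)"
        using W_upper[of "x 0"] by simp
      finally have "(norm (x t - xe))\<^sup>2 \<le> (M / m) * (norm (x 0 - xe))\<^sup>2 * exp (- r * t)"
        using m by (simp add: field_simps)
      also have "\<dots> = (K * exp (- (r / 2) * t) * norm (x 0 - xe))\<^sup>2"
        unfolding power_mult_distrib K2 by (simp add: exp_add[symmetric] power2_eq_square)
      finally show ?thesis by (rule power2_le_imp_le) (use K in simp)
    qed
    \<comment> \<open>Since the bound never exceeds the initial distance times K, the ball is never left.\<close>
    have inside: "norm (x t - xe) < \<rho>" if "t \<ge> 0" for t
    proof (rule continuous_induction_below[OF _ _ that])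
      show "continuous_on {0..} (\<lambda>t. norm (x t - xe))"
        by (intro continuous_intros ode_solution_continuous[OF sol])
    next
      fix t :: real assume "t \<ge> 0" "\<And>\<tau>. 0 < \<tau> \<Longrightarrow> \<tau> < t \<Longrightarrow> norm (x \<tau> - xe) < \<rho>"
      then have "norm (x t - xe) \<le> K * exp (- (r / 2) * t) * norm (x 0 - xe)" by (rule bound)
      also have "\<dots> \<le> K * norm (x 0 - xe)"
        using K r \<open>t \<ge> 0\<close> by (intro mult_right_mono) auto
      finally show "norm (x t - xe) < \<rho>" using e0 by simp
    qed
    show "\<forall>t\<ge>0. norm (x t - xe) \<le> K * exp (- (r / 2) * t) * norm (x 0 - xe)"
      using bound inside by auto
  qed
  moreover have "\<rho> / K > 0" "r / 2 > 0" using K r \<rho> by simp_all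
  ultimately show ?thesis
    unfolding locally_exp_stable_def using K by blast
qed

lemma locally_exp_stable_convergence:
  assumes "locally_exp_stable f xe"
  shows "\<exists>\<delta>>0. \<forall>x. ode_solution f x \<and> norm (x 0 - xe) < \<delta> \<longrightarrow> (x \<longlongrightarrow> xe) at_top"
proof -
  obtain \<delta> K r where "\<delta> > 0" "r > 0" and bound: "\<And>x t. ode_solution f x \<Longrightarrow> norm (x 0 - xe) < \<delta> \<Longrightarrow>
      t \<ge> 0 \<Longrightarrow> norm (x t - xe) \<le> K * exp (- r * t) * norm (x 0 - xe)"
    using assms unfolding locally_exp_stable_def by blast
  have exp_decay: "((\<lambda>t. exp (- r * t)) \<longlongrightarrow> 0) at_top"
  proof -
    have "filterlim (\<lambda>t. r * t) at_top at_top"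
      using \<open>r > 0\<close> by (intro filterlim_tendsto_pos_mult_at_top[OF tendsto_const _ filterlim_ident])
    then have "filterlim (\<lambda>t. - r * t) at_bot at_top" by (simp add: filterlim_uminus_at_bot)
    then show ?thesis by (rule filterlim_compose[OF exp_at_bot])
  qed
  have "(x \<longlongrightarrow> xe) at_top" if "ode_solution f x" "norm (x 0 - xe) < \<delta>" for x
  proof -
    have "((\<lambda>t. x t - xe) \<longlongrightarrow> 0) at_top"
    proof (rule Lim_null_comparison)
      show "\<forall>\<^sub>F t in at_top. norm (x t - xe) \<le> K * norm (x 0 - xe) * exp (- r * t)"
        using eventually_ge_at_top[of 0] by eventually_elim (use bound that in \<open>auto simp: ac_simps\<close>)
      show "((\<lambda>t. K * norm (x 0 - xe) * exp (- r * t)) \<longlongrightarrow> 0) at_top"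
        using tendsto_mult_right_zero[OF exp_decay] by simp
    qed
    then show ?thesis by (rule LIM_zero_cancel)
  qed
  with \<open>\<delta> > 0\<close> show ?thesis by blast
qed

section \<open>Algebraic estimates for the deviation dynamics\<close>

lemma young_ineq:
  fixes t x y :: real
  assumes "t > 0"
  shows "x * y \<le> t * x\<^sup>2 + y\<^sup>2 / (4 * t)"
proof -
  have "0 \<le> (2 * t * x - y)\<^sup>2" by simp
  then have "4 * t * (x * y) \<le> 4 * t * (t * x\<^sup>2 + y\<^sup>2 / (4 * t))"
    using assms by (simp add: power2_eq_square algebra_simps)
  then show ?thesis using assms by simp
qed

lemma abs_product_le_half_squares:
  fixes x y :: real
  shows "\<bar>x * y\<bar> \<le> (x\<^sup>2 + y\<^sup>2) / 2"
proof -
  have "0 \<le> (\<bar>x\<bar> - \<bar>y\<bar>)\<^sup>2" by simp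
  then show ?thesis by (simp add: power2_eq_square abs_mult algebra_simps)
qed

lemma sum3_sq_le:
  fixes a b c :: real
  shows "(a + b + c)\<^sup>2 \<le> 3 * (a\<^sup>2 + b\<^sup>2 + c\<^sup>2)"
proof -
  have "0 \<le> (a - b)\<^sup>2 + (a - c)\<^sup>2 + (b - c)\<^sup>2" by simp
  then show ?thesis by (simp add: power2_eq_square algebra_simps)
qed

lemma scaled_abs_le:
  fixes c t b :: real
  assumes "c \<ge> 0" "\<bar>t\<bar> \<le> b"
  shows "\<bar>c * t\<bar> \<le> c * b"
  using assms by (simp add: abs_mult mult_left_mono)

text \<open>The size of the coupling of the linearised (u, w) dynamics to the driving term z - b1.\<close>

definition cross_coupling :: "real \<Rightarrow> real \<Rightarrow> real \<Rightarrow> real \<Rightarrow> real" where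
  "cross_coupling C0 B0 k0 eps = (2*C0*B0*k0 - eps*C0)\<^sup>2 + (eps*B0*k0 - 2*B0*C0)\<^sup>2"

text \<open>The quadratic form C0 u^2 + B0 w^2 + eps u w decays along the linearised dynamics
  u' = B0 (k0 (p - u) - w), w' = - C0 (p - u), up to a term quadratic in the input p.\<close>

lemma linearized_decay:
  fixes C0 B0 k0 eps q0 u w p :: real
  assumes pos: "C0 > 0" "B0 > 0" "k0 > 0" "eps > 0"
    and eps1: "eps * k0 \<le> C0" and eps2: "2 * eps \<le> B0 * k0"
    and q0: "0 < q0" "q0 \<le> C0 * B0 * k0" "q0 \<le> eps * B0 / 2"
  defines "du \<equiv> B0 * (k0 * (p - u) - w)" and "dw \<equiv> - C0 * (p - u)"
  shows "2*C0*u*du + 2*B0*w*dw + eps*(du*w + u*dw)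
     \<le> -(3*q0/4) * (u\<^sup>2 + w\<^sup>2) + (cross_coupling C0 B0 k0 eps / q0) * p\<^sup>2"
proof -
  define al where "al = 2*C0*B0*k0 - eps*C0"
  define be where "be = eps*B0*k0 - 2*B0*C0"
  have expand: "2*C0*u*du + 2*B0*w*dw + eps*(du*w + u*dw)
     = - 2*C0*B0*k0*u\<^sup>2 + eps*C0*u\<^sup>2 - eps*B0*w\<^sup>2 - eps*B0*(k0*u*w) + u*(al*p) + w*(be*p)"
    unfolding du_def dw_def al_def be_def by (simp add: power2_eq_square algebra_simps)
  have "- (k0*u*w) \<le> (w\<^sup>2 + k0\<^sup>2*u\<^sup>2) / 2"
    using abs_product_le_half_squares[of w "k0*u"] by (simp add: power_mult_distrib ac_simps)
  then have "(eps*B0) * (- (k0*u*w)) \<le> (eps*B0) * ((w\<^sup>2 + k0\<^sup>2*u\<^sup>2) / 2)"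
    using pos by (intro mult_left_mono) auto
  then have cross: "- (eps*B0*(k0*u*w)) \<le> eps*B0*w\<^sup>2/2 + (eps*k0)*(B0*k0*u\<^sup>2)/2"
    by (simp add: algebra_simps power2_eq_square)
  have "(eps*k0)*(B0*k0*u\<^sup>2) \<le> C0*(B0*k0*u\<^sup>2)"
    using pos by (intro mult_right_mono eps1) auto
  moreover have "(2*eps)*(C0*u\<^sup>2) \<le> (B0*k0)*(C0*u\<^sup>2)"
    using pos by (intro mult_right_mono eps2) auto
  moreover have "q0*u\<^sup>2 \<le> (C0*B0*k0)*u\<^sup>2" "q0*w\<^sup>2 \<le> (eps*B0/2)*w\<^sup>2"
    using q0 by (intro mult_right_mono; simp)+
  moreover have "u*(al*p) \<le> (q0/4)*u\<^sup>2 + (al*p)\<^sup>2/q0" "w*(be*p) \<le> (q0/4)*w\<^sup>2 + (be*p)\<^sup>2/q0"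
    using young_ineq[of "q0/4"] q0 by auto
  moreover have "(al*p)\<^sup>2/q0 + (be*p)\<^sup>2/q0 = (cross_coupling C0 B0 k0 eps / q0) * p\<^sup>2"
    unfolding cross_coupling_def al_def[symmetric] be_def[symmetric]
    by (simp add: power_mult_distrib add_divide_distrib algebra_simps)
  ultimately show ?thesis
    unfolding expand using cross by (simp add: algebra_simps)
qed

text \<open>The nonlinear part of the derivative of the same form is of order (eta + sigma) times
  the squared deviation, where eta bounds the Taylor remainder of mu2 and sigma the remaining
  small factors.\<close>

lemma remainder_bound:
  fixes C0 B0 G2 eps \<eta> \<sigma> ds u w Rr Ev dc :: real
  assumes nonneg: "C0 \<ge> 0" "B0 \<ge> 0" "G2 \<ge> 0" "eps \<ge> 0" "\<eta> \<ge> 0"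
    and Rr: "\<bar>Rr\<bar> \<le> \<eta> * \<bar>ds\<bar>" and Ev: "\<bar>Ev\<bar> \<le> \<sigma>" and dc: "\<bar>dc\<bar> \<le> \<sigma>"
  shows "2*C0*u*(B0*Rr + u*Ev) - 2*B0*G2*dc*w*ds + eps*((B0*Rr + u*Ev)*w - G2*dc*ds*u)
    \<le> (\<eta>*(2*C0*B0 + eps*B0) + \<sigma>*(2*C0 + eps + 2*B0*G2 + eps*G2)) * (ds\<^sup>2 + u\<^sup>2 + w\<^sup>2)"
proof -
  define S where "S = ds\<^sup>2 + u\<^sup>2 + w\<^sup>2"
  have pair: "\<bar>x * y\<bar> \<le> S" if "x\<^sup>2 + y\<^sup>2 \<le> 2 * S" for x y :: real
    by (rule order_trans[OF abs_product_le_half_squares]) (use that in simp)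
  have uds: "\<bar>u * ds\<bar> \<le> S" and wds: "\<bar>w * ds\<bar> \<le> S" and uw: "\<bar>u * w\<bar> \<le> S" and uu: "\<bar>u * u\<bar> \<le> S"
    by (rule pair; simp add: S_def)+
  have "\<sigma> \<ge> 0" using Ev by linarith
  have small_rate: "\<bar>x * Rr\<bar> \<le> \<eta> * S" if "\<bar>x * ds\<bar> \<le> S" for x :: real
  proof -
    have "\<bar>x * Rr\<bar> \<le> \<bar>x\<bar> * (\<eta> * \<bar>ds\<bar>)" unfolding abs_mult by (rule mult_left_mono[OF Rr]) simp
    also have "\<dots> = \<eta> * \<bar>x * ds\<bar>" by (simp add: abs_mult)
    also have "\<dots> \<le> \<eta> * S" using that nonneg(5) by (rule mult_left_mono)
    finally show ?thesis .
  qed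
  have small_coeff: "\<bar>a * (x * y)\<bar> \<le> \<sigma> * S" if "\<bar>a\<bar> \<le> \<sigma>" "\<bar>x * y\<bar> \<le> S" for a x y :: real
    using that \<open>\<sigma> \<ge> 0\<close> by (simp add: abs_mult mult_mono)
  have terms:
    "\<bar>(2*C0*B0) * (u*Rr)\<bar> \<le> (2*C0*B0) * (\<eta>*S)" "\<bar>(2*C0) * (Ev*(u*u))\<bar> \<le> (2*C0) * (\<sigma>*S)"
    "\<bar>(2*B0*G2) * (dc*(w*ds))\<bar> \<le> (2*B0*G2) * (\<sigma>*S)" "\<bar>(eps*B0) * (w*Rr)\<bar> \<le> (eps*B0) * (\<eta>*S)"
    "\<bar>eps * (Ev*(u*w))\<bar> \<le> eps * (\<sigma>*S)" "\<bar>(eps*G2) * (dc*(u*ds))\<bar> \<le> (eps*G2) * (\<sigma>*S)"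
    using nonneg small_rate[OF uds] small_rate[OF wds] small_coeff[OF Ev uu] small_coeff[OF Ev uw]
      small_coeff[OF dc wds] small_coeff[OF dc uds]
    by (intro scaled_abs_le; simp)+
  have "2*C0*u*(B0*Rr + u*Ev) - 2*B0*G2*dc*w*ds + eps*((B0*Rr + u*Ev)*w - G2*dc*ds*u)
    = (2*C0*B0) * (u*Rr) + (2*C0) * (Ev*(u*u)) - (2*B0*G2) * (dc*(w*ds))
      + (eps*B0) * (w*Rr) + eps * (Ev*(u*w)) - (eps*G2) * (dc*(u*ds))"
    by (simp add: algebra_simps)
  also have "\<dots> \<le> (\<eta>*(2*C0*B0 + eps*B0) + \<sigma>*(2*C0 + eps + 2*B0*G2 + eps*G2)) * S"
    using terms unfolding abs_le_iff by (simp add: algebra_simps)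
  finally show ?thesis unfolding S_def .
qed

lemma error_dynamics_decay:
  fixes C0 B0 k0 G2 eps q0 L d \<Lambda> ds b1 u w z Rr Ev dc Dv m1 :: real
  assumes pos: "C0 > 0" "B0 > 0" "k0 > 0" "eps > 0" "d > 0"
    and eps1: "eps * k0 \<le> C0" and eps2: "2 * eps \<le> B0 * k0"
    and q0: "0 < q0" "q0 \<le> C0 * B0 * k0" "q0 \<le> eps * B0 / 2"
    and L: "L * d = cross_coupling C0 B0 k0 eps / q0 + 1"
    and z: "z = ds + b1 + u" and Ev: "Ev = k0 * ds + Rr - w"
    and Dv: "d \<le> Dv" and m1: "m1 - Dv \<le> - d"
    and remainder: "2*C0*u*(B0*Rr + u*Ev) - 2*B0*G2*dc*w*ds + eps*((B0*Rr + u*Ev)*w - G2*dc*ds*u)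
      \<le> \<Lambda> * (ds\<^sup>2 + u\<^sup>2 + w\<^sup>2)"
    and \<Lambda>: "0 \<le> \<Lambda>" "32 * \<Lambda> \<le> q0" "3 * \<Lambda> \<le> 1"
  defines "du \<equiv> Ev * (B0 + u)" and "dw \<equiv> - (C0 + G2 * dc) * ds"
  shows "2*C0*u*du + 2*B0*w*dw + eps*(du*w + u*dw) + L*(2*z*(- Dv * z) + 2*b1*((m1 - Dv) * b1))
    \<le> - (q0/2) * (u\<^sup>2 + w\<^sup>2) - (z\<^sup>2 + b1\<^sup>2)"
proof -
  define c where "c = cross_coupling C0 B0 k0 eps / q0"
  define P where "P = z\<^sup>2 + b1\<^sup>2"
  define Q where "Q = u\<^sup>2 + w\<^sup>2"
  have c: "c \<ge> 0" unfolding c_def cross_coupling_def using q0 by simp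
  have "L = (c + 1) / d" using L pos(5) unfolding c_def[symmetric] by (simp add: field_simps)
  then have L_nonneg: "L \<ge> 0" using c pos(5) by simp
  have ds: "ds = (z - b1) - u" using z by simp
  have linear: "2*C0*u*(B0*(k0*ds - w)) + 2*B0*w*(-C0*ds) + eps*(B0*(k0*ds - w)*w + u*(-C0*ds))
      \<le> -(3*q0/4) * Q + c * (z - b1)\<^sup>2"
    using linearized_decay[OF pos(1-4) eps1 eps2 q0, where u = u and w = w and p = "z - b1"]
    unfolding ds c_def Q_def by simp
  have split: "2*C0*u*du + 2*B0*w*dw + eps*(du*w + u*dw)
      = (2*C0*u*(B0*(k0*ds - w)) + 2*B0*w*(-C0*ds) + eps*(B0*(k0*ds - w)*w + u*(-C0*ds)))
      + (2*C0*u*(B0*Rr + u*Ev) - 2*B0*G2*dc*w*ds + eps*((B0*Rr + u*Ev)*w - G2*dc*ds*u))"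
    unfolding du_def dw_def Ev by (simp add: algebra_simps)
  have washout: "L*(2*z*(- Dv * z) + 2*b1*((m1 - Dv) * b1)) \<le> - 2 * (L * d) * P"
  proof -
    have "d * z\<^sup>2 \<le> Dv * z\<^sup>2" "(m1 - Dv) * b1\<^sup>2 \<le> (- d) * b1\<^sup>2"
      using Dv m1 by (intro mult_right_mono; simp)+
    then have "2*z*(- Dv * z) + 2*b1*((m1 - Dv) * b1) \<le> - 2 * d * P"
      unfolding P_def by (simp add: power2_eq_square algebra_simps)
    from mult_left_mono[OF this L_nonneg] show ?thesis by (simp add: algebra_simps)
  qed
  have "(z - b1)\<^sup>2 \<le> 2 * P" using abs_product_le_half_squares[of z b1] unfolding P_def
    by (simp add: power2_diff abs_le_iff)
  from mult_left_mono[OF this c] have coupling: "c * (z - b1)\<^sup>2 \<le> 2 * (c * P)" by simp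
  have "ds\<^sup>2 \<le> 3 * P + 3 * u\<^sup>2"
    using sum3_sq_le[of z "- b1" "- u"] unfolding ds P_def by simp
  then have "ds\<^sup>2 + u\<^sup>2 + w\<^sup>2 \<le> 3 * P + 4 * Q"
    unfolding Q_def using zero_le_power2[of w] by argo
  from mult_left_mono[OF this \<Lambda>(1)]
  have small: "\<Lambda> * (ds\<^sup>2 + u\<^sup>2 + w\<^sup>2) \<le> (3 * \<Lambda>) * P + (4 * \<Lambda>) * Q"
    by (simp add: algebra_simps)
  have "(3 * \<Lambda>) * P \<le> 1 * P" "(4 * \<Lambda>) * Q \<le> (q0 / 8) * Q"
    using \<Lambda> unfolding P_def Q_def by (intro mult_right_mono; simp)+
  moreover have "0 \<le> q0 * Q" using q0 unfolding Q_def by simp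
  moreover have "- 2 * (L * d) * P = - 2 * (c * P) - 2 * P" unfolding L c_def by (simp add: algebra_simps)
  ultimately show ?thesis
    using linear remainder washout coupling small unfolding split P_def[symmetric] Q_def[symmetric]
    by (simp add: field_simps)
qed

lemma quadratic_form_upper:
  fixes C0 B0 eps L u w z b1 :: real
  assumes "C0 \<ge> 0" "B0 \<ge> 0" "eps \<ge> 0" "L \<ge> 0"
  shows "C0*u\<^sup>2 + B0*w\<^sup>2 + eps*(u*w) + L*(z\<^sup>2 + b1\<^sup>2) \<le> (C0 + B0 + eps + L) * (z\<^sup>2 + b1\<^sup>2 + u\<^sup>2 + w\<^sup>2)"
proof -
  define N where "N = z\<^sup>2 + b1\<^sup>2 + u\<^sup>2 + w\<^sup>2"
  have "u*w \<le> N"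
    using abs_product_le_half_squares[of u w] zero_le_power2[of z] zero_le_power2[of b1]
    unfolding N_def by argo
  then have "eps*(u*w) \<le> eps*N" using assms(3) by (rule mult_left_mono)
  moreover have "C0*u\<^sup>2 \<le> C0*N" "B0*w\<^sup>2 \<le> B0*N" "L*(z\<^sup>2 + b1\<^sup>2) \<le> L*N"
    using assms unfolding N_def by (intro mult_left_mono; simp)+
  ultimately show ?thesis unfolding N_def[symmetric] by (simp add: algebra_simps)
qed

lemma quadratic_form_lower:
  fixes C0 B0 eps L k0 u w z b1 :: real
  assumes pos: "C0 > 0" "B0 > 0" "eps > 0" "L > 0" "k0 > 0"
    and eps1: "eps * k0 \<le> C0" and eps2: "2 * eps \<le> B0 * k0"
  shows "min (min (C0/2) (B0/2)) L * (z\<^sup>2 + b1\<^sup>2 + u\<^sup>2 + w\<^sup>2) \<le> C0*u\<^sup>2 + B0*w\<^sup>2 + eps*(u*w) + L*(z\<^sup>2 + b1\<^sup>2)"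
proof -
  define m where "m = min (min (C0/2) (B0/2)) L"
  \<comment> \<open>The cross term is absorbed by a k0-weighted Young inequality.\<close>
  have "- (u*w) \<le> (k0/2)*u\<^sup>2 + w\<^sup>2/(2*k0)"
    using young_ineq[of "k0/2" "- u" w] pos(5) by simp
  then have "- (eps*(u*w)) \<le> (eps*k0)/2*u\<^sup>2 + (2*eps)/(4*k0)*w\<^sup>2"
    using mult_left_mono[of _ _ eps] pos(3,5) by (fastforce simp: field_simps)
  also have "\<dots> \<le> C0/2*u\<^sup>2 + (B0*k0)/(4*k0)*w\<^sup>2"
    using eps1 eps2 pos(5) by (intro add_mono mult_right_mono divide_right_mono) auto
  finally have cross: "- (eps*(u*w)) \<le> (C0*u\<^sup>2)/2 + (B0*w\<^sup>2)/4" using pos(5) by simp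
  have "m*(z\<^sup>2 + b1\<^sup>2 + u\<^sup>2 + w\<^sup>2) = m*(z\<^sup>2 + b1\<^sup>2) + m*u\<^sup>2 + m*w\<^sup>2" by (simp add: algebra_simps)
  also have "\<dots> \<le> L*(z\<^sup>2 + b1\<^sup>2) + (C0/2)*u\<^sup>2 + (B0/2)*w\<^sup>2"
    unfolding m_def by (intro add_mono mult_right_mono) auto
  also have "\<dots> = L*(z\<^sup>2 + b1\<^sup>2) + (C0*u\<^sup>2)/2 + (B0*w\<^sup>2)/2" by simp
  moreover have "0 \<le> B0*w\<^sup>2" using pos(2) by simp
  ultimately show ?thesis using cross unfolding m_def[symmetric] by argo
qed

lemma deviation_coordinates_equivalent:
  fixes ds b1 u w z :: real
  assumes "z = ds + b1 + u"
  shows "ds\<^sup>2 + b1\<^sup>2 + u\<^sup>2 + w\<^sup>2 \<le> 4 * (z\<^sup>2 + b1\<^sup>2 + u\<^sup>2 + w\<^sup>2)"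
    and "z\<^sup>2 + b1\<^sup>2 + u\<^sup>2 + w\<^sup>2 \<le> 4 * (ds\<^sup>2 + b1\<^sup>2 + u\<^sup>2 + w\<^sup>2)"
proof -
  have "ds\<^sup>2 \<le> 3 * (z\<^sup>2 + b1\<^sup>2 + u\<^sup>2)" using sum3_sq_le[of z "- b1" "- u"] assms by simp
  then show "ds\<^sup>2 + b1\<^sup>2 + u\<^sup>2 + w\<^sup>2 \<le> 4 * (z\<^sup>2 + b1\<^sup>2 + u\<^sup>2 + w\<^sup>2)"
    using zero_le_power2[of z] zero_le_power2[of w] by argo
  have "z\<^sup>2 \<le> 3 * (ds\<^sup>2 + b1\<^sup>2 + u\<^sup>2)" using sum3_sq_le[of ds b1 u] assms by simp
  then show "z\<^sup>2 + b1\<^sup>2 + u\<^sup>2 + w\<^sup>2 \<le> 4 * (ds\<^sup>2 + b1\<^sup>2 + u\<^sup>2 + w\<^sup>2)"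
    using zero_le_power2[of ds] zero_le_power2[of w] by argo
qed

section \<open>The closed-loop chemostat near its set point\<close>

lemma chemostat_cl_unsaturated:
  assumes "Dmin \<le> Dh - G1 * (s - sbar)" "Dh - G1 * (s - sbar) \<le> Dmax"
  defines "D \<equiv> Dh - G1 * (s - sbar)"
  shows "chemostat_cl mu1 mu2 s_in sbar Dmin Dmax G1 G2 (s, b1, b2, Dh) =
    (- mu1 s * b1 - mu2 s * b2 + D * (s_in - s), (mu1 s - D) * b1, (mu2 s - D) * b2,
     - G2 * (s - sbar) * ((Dh - Dmin) * (Dmax - Dh)))"
  using assms unfolding chemostat_cl_def sat_def D_def Let_def by (simp add: algebra_simps)

lemma derivative_remainder_eventually:
  fixes g :: "real \<Rightarrow> real"
  assumes "(g has_real_derivative g') (at a)" "e > 0"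
  shows "\<forall>\<^sub>F x in nhds a. \<bar>g x - g a - g' * (x - a)\<bar> \<le> e * \<bar>x - a\<bar>"
proof -
  obtain \<delta> where "\<delta> > 0" "\<And>x. norm (x - a) < \<delta> \<Longrightarrow> norm (g x - g a - g' * (x - a)) \<le> e * norm (x - a)"
    using assms unfolding has_field_derivative_def has_derivative_at_alt by (auto simp: ac_simps)
  then show ?thesis unfolding eventually_nhds_metric dist_norm by auto
qed

lemma norm_state_sq: "(norm ((a, b, c, d) :: state))\<^sup>2 = a\<^sup>2 + b\<^sup>2 + c\<^sup>2 + d\<^sup>2"
  by (simp add: norm_Pair)

text \<open>The hypotheses actually used: continuity of mu1 and differentiability of mu2 at the set
  point sbar, coexistence conditions on the rates, and the gain condition G1 > - mu2'(sbar).\<close>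

locale chemostat_setpoint =
  fixes mu1 mu2 :: "real \<Rightarrow> real" and dmu2 s_in sbar Dmin Dmax G1 G2 :: real
  assumes mu1_cont: "isCont mu1 sbar"
    and mu2_deriv: "(mu2 has_real_derivative dmu2) (at sbar)"
    and sbar_less: "sbar < s_in"
    and mu_less: "mu1 sbar < mu2 sbar"
    and Dmin_pos: "0 < Dmin" and Dmin_less: "Dmin < mu2 sbar" and Dmax_greater: "mu2 sbar < Dmax"
    and G2_pos: "0 < G2" and gain: "0 < dmu2 + G1"
begin

abbreviation cl :: "state \<Rightarrow> state" where
  "cl \<equiv> chemostat_cl mu1 mu2 s_in sbar Dmin Dmax G1 G2"

text \<open>Equilibrium, linearisation constants (k0 is the effective gain, C0 the integral gain at the
  set point, d a washout rate), and the weights eps, L of the Lyapunov function.\<close>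

definition D0 :: real where "D0 = mu2 sbar"
definition B0 :: real where "B0 = s_in - sbar"
definition xe :: state where "xe = (sbar, 0, B0, D0)"
definition k0 :: real where "k0 = dmu2 + G1"
definition C0 :: real where "C0 = G2 * ((D0 - Dmin) * (Dmax - D0))"
definition d :: real where "d = min Dmin ((D0 - mu1 sbar) / 2)"
definition eps :: real where "eps = min (B0 * k0 / 2) (C0 / k0)"
definition q0 :: real where "q0 = min (C0 * B0 * k0) (eps * B0 / 2)"
definition L :: real where "L = (cross_coupling C0 B0 k0 eps / q0 + 1) / d"

lemma constants:
  shows B0_pos: "B0 > 0" and k0_pos: "k0 > 0" and C0_pos: "C0 > 0" and d_pos: "d > 0"
    and eps_pos: "eps > 0" and eps1: "eps * k0 \<le> C0" and eps2: "2 * eps \<le> B0 * k0"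
    and q0: "0 < q0" "q0 \<le> C0 * B0 * k0" "q0 \<le> eps * B0 / 2"
    and L_pos: "L > 0" and L_d: "L * d = cross_coupling C0 B0 k0 eps / q0 + 1"
proof -
  show B0: "B0 > 0" and k0: "k0 > 0" and C0: "C0 > 0" and d: "d > 0"
    unfolding B0_def k0_def C0_def d_def D0_def
    using sbar_less gain G2_pos Dmin_pos Dmin_less Dmax_greater mu_less by auto
  show eps: "eps > 0" unfolding eps_def using B0 k0 C0 by simp
  show "eps * k0 \<le> C0" unfolding eps_def using k0 by (simp add: min_def field_simps)
  show "2 * eps \<le> B0 * k0" unfolding eps_def by simp
  show q0: "0 < q0" "q0 \<le> C0 * B0 * k0" "q0 \<le> eps * B0 / 2"
    unfolding q0_def using B0 k0 C0 eps by auto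
  have "cross_coupling C0 B0 k0 eps \<ge> 0" unfolding cross_coupling_def by simp
  then show "L > 0" unfolding L_def using q0 d by (simp add: add_nonneg_pos)
  show "L * d = cross_coupling C0 B0 k0 eps / q0 + 1" unfolding L_def using d by simp
qed

lemma equilibrium: "cl xe = 0"
  using chemostat_cl_unsaturated[of Dmin D0 G1 sbar sbar Dmax] Dmin_less Dmax_greater
  unfolding xe_def B0_def D0_def by (simp add: zero_prod_def)

definition W :: "state \<Rightarrow> real" where
  "W y = (case y of (s, b1, b2, Dh) \<Rightarrow>
     C0*(b2 - B0)\<^sup>2 + B0*(Dh - D0)\<^sup>2 + eps*((b2 - B0)*(Dh - D0)) + L*((s + b1 + b2 - s_in)\<^sup>2 + b1\<^sup>2))"

definition DW :: "state \<Rightarrow> state \<Rightarrow> real" where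
  "DW y h = (case y of (s, b1, b2, Dh) \<Rightarrow> case h of (hs, hb1, hb2, hD) \<Rightarrow>
     2*C0*(b2 - B0)*hb2 + 2*B0*(Dh - D0)*hD + eps*(hb2*(Dh - D0) + (b2 - B0)*hD)
     + L*(2*(s + b1 + b2 - s_in)*(hs + hb1 + hb2) + 2*b1*hb1))"

lemma W_has_derivative: "(W has_derivative DW y) (at y)"
  unfolding W_def[abs_def] DW_def case_prod_beta
  by (auto intro!: derivative_eq_intros ext simp: algebra_simps)

lemma W_bounds:
  "min (min (C0/2) (B0/2)) L / 4 * (norm (y - xe))\<^sup>2 \<le> W y"
  "W y \<le> 4 * (C0 + B0 + eps + L) * (norm (y - xe))\<^sup>2"
proof -
  obtain s b1 b2 Dh where y: "y = (s, b1, b2, Dh)" by (cases y) auto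
  have norm: "(norm (y - xe))\<^sup>2 = (s - sbar)\<^sup>2 + b1\<^sup>2 + (b2 - B0)\<^sup>2 + (Dh - D0)\<^sup>2"
    unfolding y xe_def by (simp add: norm_state_sq)
  have z: "s + b1 + b2 - s_in = (s - sbar) + b1 + (b2 - B0)" unfolding B0_def by simp
  note equiv = deviation_coordinates_equivalent[OF z, of "Dh - D0"]
  have W: "W y = C0*(b2 - B0)\<^sup>2 + B0*(Dh - D0)\<^sup>2 + eps*((b2 - B0)*(Dh - D0))
      + L*((s + b1 + b2 - s_in)\<^sup>2 + b1\<^sup>2)"
    unfolding y W_def by simp
  have "min (min (C0/2) (B0/2)) L * ((s + b1 + b2 - s_in)\<^sup>2 + b1\<^sup>2 + (b2 - B0)\<^sup>2 + (Dh - D0)\<^sup>2) \<le> W y"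
    unfolding W by (rule quadratic_form_lower[OF C0_pos B0_pos eps_pos L_pos k0_pos eps1 eps2])
  moreover have "min (min (C0/2) (B0/2)) L / 4 * (norm (y - xe))\<^sup>2
      \<le> min (min (C0/2) (B0/2)) L * ((s + b1 + b2 - s_in)\<^sup>2 + b1\<^sup>2 + (b2 - B0)\<^sup>2 + (Dh - D0)\<^sup>2)"
    unfolding norm using mult_left_mono[OF equiv(1), of "min (min (C0/2) (B0/2)) L / 4"]
      C0_pos B0_pos L_pos by simp
  ultimately show "min (min (C0/2) (B0/2)) L / 4 * (norm (y - xe))\<^sup>2 \<le> W y" by linarith
  have "W y \<le> (C0 + B0 + eps + L) * ((s + b1 + b2 - s_in)\<^sup>2 + b1\<^sup>2 + (b2 - B0)\<^sup>2 + (Dh - D0)\<^sup>2)"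
    unfolding W using C0_pos B0_pos eps_pos L_pos by (intro quadratic_form_upper) auto
  also have "\<dots> \<le> (C0 + B0 + eps + L) * (4 * (norm (y - xe))\<^sup>2)"
    unfolding norm using C0_pos B0_pos eps_pos L_pos by (intro mult_left_mono equiv(2)) auto
  finally show "W y \<le> 4 * (C0 + B0 + eps + L) * (norm (y - xe))\<^sup>2" by (simp only: ac_simps)
qed

definition local_regime :: "real \<Rightarrow> state \<Rightarrow> bool" where
  "local_regime tol y = (case y of (s, b1, b2, Dh) \<Rightarrow>
     let Dv = Dh - G1 * (s - sbar) in
       Dmin \<le> Dv \<and> Dv \<le> Dmax \<and> mu1 s - Dv \<le> - d \<and> \<bar>mu2 s - Dv\<bar> \<le> tol
       \<and> \<bar>(Dh - Dmin) * (Dmax - Dh) - (D0 - Dmin) * (Dmax - D0)\<bar> \<le> tol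
       \<and> \<bar>mu2 s - D0 - dmu2 * (s - sbar)\<bar> \<le> tol * \<bar>s - sbar\<bar>)"

text \<open>Every tolerance is met in a neighbourhood of the equilibrium, by continuity of mu1, mu2
  and of the feedback, and by differentiability of mu2.\<close>

lemma eventually_local_regime:
  assumes "tol > 0"
  shows "\<forall>\<^sub>F y in nhds xe. local_regime tol y"
proof -
  define Dv where "Dv y = snd (snd (snd y)) - G1 * (fst y - sbar)" for y :: state
  have s: "(fst \<longlongrightarrow> sbar) (nhds xe)" and Dh: "((\<lambda>y. snd (snd (snd y))) \<longlongrightarrow> D0) (nhds xe)"
    using tendsto_fst[OF filterlim_ident] tendsto_snd[OF tendsto_snd[OF tendsto_snd[OF filterlim_ident]]]
    unfolding xe_def by auto
  have "(Dv \<longlongrightarrow> D0 - G1 * (sbar - sbar)) (nhds xe)"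
    unfolding Dv_def[abs_def] by (intro tendsto_intros s Dh)
  then have Dv: "(Dv \<longlongrightarrow> D0) (nhds xe)" by simp
  have mu1: "((\<lambda>y. mu1 (fst y) - Dv y) \<longlongrightarrow> mu1 sbar - D0) (nhds xe)"
    by (intro tendsto_diff isCont_tendsto_compose[OF mu1_cont s] Dv)
  have mu2: "((\<lambda>y. mu2 (fst y) - Dv y) \<longlongrightarrow> 0) (nhds xe)"
    using tendsto_diff[OF isCont_tendsto_compose[OF DERIV_isCont[OF mu2_deriv] s] Dv]
    unfolding D0_def by simp
  have "((\<lambda>y. (snd (snd (snd y)) - Dmin) * (Dmax - snd (snd (snd y))) - (D0 - Dmin) * (Dmax - D0))
      \<longlongrightarrow> (D0 - Dmin) * (Dmax - D0) - (D0 - Dmin) * (Dmax - D0)) (nhds xe)"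
    by (intro tendsto_intros Dh)
  then have prod: "((\<lambda>y. (snd (snd (snd y)) - Dmin) * (Dmax - snd (snd (snd y)))
      - (D0 - Dmin) * (Dmax - D0)) \<longlongrightarrow> 0) (nhds xe)" by simp
  have remainder: "\<forall>\<^sub>F y in nhds xe. \<bar>mu2 (fst y) - D0 - dmu2 * (fst y - sbar)\<bar> \<le> tol * \<bar>fst y - sbar\<bar>"
    using filterlim_iff[THEN iffD1, OF s, rule_format, OF derivative_remainder_eventually[OF mu2_deriv assms]]
    unfolding D0_def .
  have "d \<le> (D0 - mu1 sbar) / 2" unfolding d_def by (rule min.cobounded2)
  then have "- d > mu1 sbar - D0" unfolding D0_def using mu_less by argo
  moreover have "Dmin < D0" "D0 < Dmax" unfolding D0_def using Dmin_less Dmax_greater by auto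
  ultimately have "\<forall>\<^sub>F y in nhds xe. Dmin < Dv y \<and> Dv y < Dmax \<and> mu1 (fst y) - Dv y < - d
      \<and> \<bar>mu2 (fst y) - Dv y\<bar> < tol
      \<and> \<bar>(snd (snd (snd y)) - Dmin) * (Dmax - snd (snd (snd y))) - (D0 - Dmin) * (Dmax - D0)\<bar> < tol
      \<and> \<bar>mu2 (fst y) - D0 - dmu2 * (fst y - sbar)\<bar> \<le> tol * \<bar>fst y - sbar\<bar>"
    using order_tendstoD[OF Dv] order_tendstoD[OF mu1] tendstoD[OF mu2 assms] tendstoD[OF prod assms] remainder
    by (auto intro!: eventually_conj simp: dist_real_def)
  then show ?thesis
    by eventually_elim (auto simp: local_regime_def Dv_def split: prod.splits)
qed

definition tol0 :: real where
  "tol0 = min (q0/32) (1/3) / ((2*C0*B0 + eps*B0) + (2*C0 + eps + 2*B0*G2 + eps*G2))"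
definition decay_rate :: real where "decay_rate = min (q0/2) 1 / (C0 + B0 + eps + L)"

lemma rates_pos: "tol0 > 0" "decay_rate > 0"
  unfolding tol0_def decay_rate_def using q0 C0_pos B0_pos eps_pos L_pos G2_pos
  by (simp_all add: add_pos_nonneg)

lemma decay_in_local_regime:
  assumes regime: "local_regime tol0 y"
  shows "DW y (cl y) \<le> - decay_rate * W y"
proof -
  obtain s b1 b2 Dh where y: "y = (s, b1, b2, Dh)" by (cases y) auto
  define ds u w z
    where "ds = s - sbar" and "u = b2 - B0" and "w = Dh - D0" and "z = s + b1 + b2 - s_in"
  define Dv Rr dc where "Dv = Dh - G1 * ds" and "Rr = mu2 s - D0 - dmu2 * ds"
    and "dc = (Dh - Dmin) * (Dmax - Dh) - (D0 - Dmin) * (Dmax - D0)"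
  define A where "A = (2*C0*B0 + eps*B0) + (2*C0 + eps + 2*B0*G2 + eps*G2)"
  have A: "A > 0" unfolding A_def using C0_pos B0_pos eps_pos G2_pos by (simp add: add_pos_nonneg)
  have tol0: "tol0 \<ge> 0" "tol0 * A = min (q0/32) (1/3)"
    unfolding tol0_def A_def[symmetric] using A q0 by auto
  have facts: "Dmin \<le> Dv" "Dv \<le> Dmax" "mu1 s - Dv \<le> - d" "\<bar>mu2 s - Dv\<bar> \<le> tol0"
    "\<bar>dc\<bar> \<le> tol0" "\<bar>Rr\<bar> \<le> tol0 * \<bar>ds\<bar>"
    using regime unfolding y local_regime_def Dv_def Rr_def dc_def ds_def by (simp_all add: Let_def)
  have Ev: "mu2 s - Dv = k0 * ds + Rr - w" unfolding Dv_def Rr_def k0_def w_def by (simp add: algebra_simps)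
  have "DW y (cl y) = 2*C0*u*((mu2 s - Dv) * (B0 + u)) + 2*B0*w*(- (C0 + G2 * dc) * ds)
      + eps*(((mu2 s - Dv) * (B0 + u))*w + u*(- (C0 + G2 * dc) * ds))
      + L*(2*z*(- Dv * z) + 2*b1*((mu1 s - Dv) * b1))"
    using facts(1,2) unfolding y chemostat_cl_unsaturated[OF facts(1,2)[unfolded Dv_def ds_def]]
    unfolding DW_def Dv_def ds_def u_def w_def z_def dc_def C0_def B0_def
    by (simp add: algebra_simps)
  also have "\<dots> \<le> - (q0/2) * (u\<^sup>2 + w\<^sup>2) - (z\<^sup>2 + b1\<^sup>2)"
  proof (rule error_dynamics_decay[OF C0_pos B0_pos k0_pos eps_pos d_pos eps1 eps2 q0 L_d _ Ev])
    show "z = ds + b1 + u" unfolding z_def ds_def u_def B0_def by simp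
    show "d \<le> Dv" using facts(1) d_def by linarith
    show "mu1 s - Dv \<le> - d" by (rule facts(3))
    show "2*C0*u*(B0*Rr + u*(mu2 s - Dv)) - 2*B0*G2*dc*w*ds
        + eps*((B0*Rr + u*(mu2 s - Dv))*w - G2*dc*ds*u) \<le> (tol0 * A) * (ds\<^sup>2 + u\<^sup>2 + w\<^sup>2)"
      using remainder_bound[of C0 B0 G2 eps tol0 Rr ds "mu2 s - Dv" tol0 dc u w,
          OF _ _ _ _ tol0(1) facts(6,4,5)] C0_pos B0_pos eps_pos G2_pos
      unfolding A_def distrib_left by simp
    show "0 \<le> tol0 * A" "32 * (tol0 * A) \<le> q0" "3 * (tol0 * A) \<le> 1"
      unfolding tol0(2) using q0 by auto
  qed
  also have "\<dots> \<le> - min (q0/2) 1 * (z\<^sup>2 + b1\<^sup>2 + u\<^sup>2 + w\<^sup>2)"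
  proof -
    have "min (q0/2) 1 * (u\<^sup>2 + w\<^sup>2) \<le> (q0/2) * (u\<^sup>2 + w\<^sup>2)"
      "min (q0/2) 1 * (z\<^sup>2 + b1\<^sup>2) \<le> 1 * (z\<^sup>2 + b1\<^sup>2)"
      by (intro mult_right_mono; simp)+
    then show ?thesis by argo
  qed
  also have "\<dots> \<le> - decay_rate * W y"
  proof -
    have "W y \<le> (C0 + B0 + eps + L) * (z\<^sup>2 + b1\<^sup>2 + u\<^sup>2 + w\<^sup>2)"
      unfolding y W_def z_def u_def w_def using C0_pos B0_pos eps_pos L_pos
      by (simp add: quadratic_form_upper)
    from mult_left_mono[OF this less_imp_le[OF rates_pos(2)]] show ?thesis
      unfolding decay_rate_def using C0_pos B0_pos eps_pos L_pos by simp
  qed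
  finally show ?thesis .
qed

theorem exponentially_stable: "locally_exp_stable cl xe"
proof -
  obtain \<rho> where \<rho>: "\<rho> > 0" and regime: "\<And>y. dist y xe < \<rho> \<Longrightarrow> local_regime tol0 y"
    using eventually_local_regime[OF rates_pos(1)] unfolding eventually_nhds_metric by blast
  have "min (min (C0/2) (B0/2)) L / 4 > 0" "4 * (C0 + B0 + eps + L) > 0"
    using C0_pos B0_pos eps_pos L_pos by simp_all
  moreover have "DW y (cl y) \<le> - decay_rate * W y" if "norm (y - xe) < \<rho>" for y
    using decay_in_local_regime regime that by (simp add: dist_norm)
  ultimately show ?thesis
    using lyapunov_exp_stable[OF W_has_derivative W_bounds(1) _ W_bounds(2) _ _ rates_pos(2) \<rho>] by blast
qed

end

theorem proposition3:
  fixes mu1 mu2 mu1' mu2' :: "real \<Rightarrow> real"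
    and s_in sbar Dmin Dmax G1 G2 :: real
  assumes s_in_pos: "s_in > 0"
    and mu1_deriv: "\<And>s. s \<in> {0..s_in} \<Longrightarrow> (mu1 has_real_derivative mu1' s) (at s within {0..s_in})"
    and mu2_deriv: "\<And>s. s \<in> {0..s_in} \<Longrightarrow> (mu2 has_real_derivative mu2' s) (at s within {0..s_in})"
    and mu1'_cont: "continuous_on {0..s_in} mu1'"
    and mu2'_cont: "continuous_on {0..s_in} mu2'"
    and mu1_nonneg: "\<And>s. s \<in> {0..s_in} \<Longrightarrow> mu1 s \<ge> 0"
    and mu2_nonneg: "\<And>s. s \<in> {0..s_in} \<Longrightarrow> mu2 s \<ge> 0"
    and sbar: "0 < sbar" "sbar < s_in"
    and mu_less: "mu1 sbar < mu2 sbar"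
    and Dmin: "0 < Dmin" "Dmin < mu2 sbar"
    and Dmax: "mu2 sbar < Dmax"
    and G1: "G1 > 0" and G2: "G2 > 0"
    and G1_gain: "G1 > - mu2' sbar"
  shows "chemostat_cl mu1 mu2 s_in sbar Dmin Dmax G1 G2 (sbar, 0, s_in - sbar, mu2 sbar) = 0
    \<and> locally_exp_stable (chemostat_cl mu1 mu2 s_in sbar Dmin Dmax G1 G2) (sbar, 0, s_in - sbar, mu2 sbar)
    \<and> (\<exists>\<delta>>0. \<forall>x. ode_solution (chemostat_cl mu1 mu2 s_in sbar Dmin Dmax G1 G2) x
            \<and> norm (x 0 - (sbar, 0, s_in - sbar, mu2 sbar)) < \<delta> \<longrightarrow>
          ((\<lambda>t. snd (snd (snd (x t)))) \<longlongrightarrow> mu2 sbar) at_top)"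
proof -
  have interior: "at sbar within {0..s_in} = at sbar" using sbar by (intro at_within_Icc_at) auto
  interpret chemostat_setpoint mu1 mu2 "mu2' sbar" s_in sbar Dmin Dmax G1 G2
  proof
    show "isCont mu1 sbar" using DERIV_isCont mu1_deriv[of sbar] sbar interior by auto
    show "(mu2 has_real_derivative mu2' sbar) (at sbar)" using mu2_deriv[of sbar] sbar interior by auto
  qed (use sbar mu_less Dmin Dmax G2 G1_gain in auto)
  obtain \<delta> where "\<delta> > 0"
    and conv: "\<And>x. ode_solution cl x \<Longrightarrow> norm (x 0 - xe) < \<delta> \<Longrightarrow> (x \<longlongrightarrow> xe) at_top"
    using locally_exp_stable_convergence[OF exponentially_stable] by blast
  have "((\<lambda>t. snd (snd (snd (x t)))) \<longlongrightarrow> mu2 sbar) at_top"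
    if "ode_solution cl x" "norm (x 0 - xe) < \<delta>" for x
    using tendsto_snd[OF tendsto_snd[OF tendsto_snd[OF conv[OF that]]]] by (simp add: xe_def D0_def)
  then show ?thesis
    using equilibrium exponentially_stable \<open>\<delta> > 0\<close> unfolding xe_def B0_def D0_def by blast
qed

end
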